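(* Let $n<\omega$ and let $\mathcal{K}$ be a class of simple algebras of $\mathbf{M}_n$ such that the variety $\mathbf{V}(\mathcal{K})$ generated by $\mathcal{K}$ is locally finite. Then every finite simple algebra in $\mathbf{V}(\mathcal{K})$ is isomorphic to a subalgebra of a member of $\mathcal{K}$.
   Context: $\mathbf{M}_n$ is the variety of pseudocomplemented de Morgan algebras $(L;\wedge,\vee,{}^\ast,{}^\prime,0,1)$ (bounded distributive lattice, pseudocomplement ${}^\ast$, de Morgan involution ${}^\prime$) satisfying $x\wedge x^{\prime\ast\prime}\le y\vee y^\ast$ and $(x\wedge x^{\prime\ast})^{n(\prime\ast)}=(x\wedge x^{\prime\ast})^{(n+1)(\prime\ast)}$, where $x^{0(\prime\ast)}=x$, $x^{(k+1)(\prime\ast)}=((x^{k(\prime\ast)})')^\ast$. Simple algebras are non-trivial. *)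

theory Defs
  imports Main
begin

text \<open>Algebras of the signature (meet, join, pseudocomplement, de Morgan negation, 0, 1),
  given by a carrier set and total operations (only their behaviour on the carrier matters).\<close>

record 'a pdm =
  carrier :: "'a set"
  meet :: "'a \<Rightarrow> 'a \<Rightarrow> 'a"
  join :: "'a \<Rightarrow> 'a \<Rightarrow> 'a"
  pc :: "'a \<Rightarrow> 'a"
  neg :: "'a \<Rightarrow> 'a"
  bot :: 'a
  top :: 'a

definition is_alg :: "('a, 'm) pdm_scheme \<Rightarrow> bool" where
  "is_alg A \<longleftrightarrow> bot A \<in> carrier A \<and> top A \<in> carrier A \<and>
     (\<forall>x\<in>carrier A. \<forall>y\<in>carrier A. meet A x y \<in> carrier A \<and> join A x y \<in> carrier A) \<and>
     (\<forall>x\<in>carrier A. pc A x \<in> carrier A \<and> neg A x \<in> carrier A)"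

definition le :: "('a, 'm) pdm_scheme \<Rightarrow> 'a \<Rightarrow> 'a \<Rightarrow> bool" where
  "le A x y \<longleftrightarrow> meet A x y = x"

definition iter_ns :: "('a, 'm) pdm_scheme \<Rightarrow> nat \<Rightarrow> 'a \<Rightarrow> 'a" where
  "iter_ns A k x = ((\<lambda>z. pc A (neg A z)) ^^ k) x"

definition M :: "nat \<Rightarrow> ('a, 'm) pdm_scheme \<Rightarrow> bool" where
  "M n A \<longleftrightarrow> is_alg A \<and>
    (\<forall>x\<in>carrier A. \<forall>y\<in>carrier A. \<forall>z\<in>carrier A.
        meet A (meet A x y) z = meet A x (meet A y z) \<and>
        join A (join A x y) z = join A x (join A y z) \<and>
        meet A x y = meet A y x \<and> join A x y = join A y x \<and>
        meet A x (join A x y) = x \<and> join A x (meet A x y) = x \<and>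
        meet A x (join A y z) = join A (meet A x y) (meet A x z)) \<and>
    (\<forall>x\<in>carrier A. meet A (bot A) x = bot A \<and> meet A (top A) x = x) \<and>
    (\<forall>x\<in>carrier A. \<forall>y\<in>carrier A. meet A x y = bot A \<longleftrightarrow> le A y (pc A x)) \<and>
    (\<forall>x\<in>carrier A. \<forall>y\<in>carrier A.
        neg A (neg A x) = x \<and>
        neg A (join A x y) = meet A (neg A x) (neg A y) \<and>
        neg A (meet A x y) = join A (neg A x) (neg A y)) \<and>
    neg A (bot A) = top A \<and>
    (\<forall>x\<in>carrier A. \<forall>y\<in>carrier A.
        le A (meet A x (neg A (pc A (neg A x)))) (join A y (pc A y))) \<and>
    (\<forall>x\<in>carrier A.
        iter_ns A n (meet A x (pc A (neg A x))) = iter_ns A (Suc n) (meet A x (pc A (neg A x))))"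

definition congruence :: "('a, 'm) pdm_scheme \<Rightarrow> ('a \<times> 'a) set \<Rightarrow> bool" where
  "congruence A \<theta> \<longleftrightarrow> equiv (carrier A) \<theta> \<and>
    (\<forall>x y u v. (x, y) \<in> \<theta> \<longrightarrow> (u, v) \<in> \<theta> \<longrightarrow>
        (meet A x u, meet A y v) \<in> \<theta> \<and> (join A x u, join A y v) \<in> \<theta>) \<and>
    (\<forall>x y. (x, y) \<in> \<theta> \<longrightarrow> (pc A x, pc A y) \<in> \<theta> \<and> (neg A x, neg A y) \<in> \<theta>)"

definition simple :: "('a, 'm) pdm_scheme \<Rightarrow> bool" where
  "simple A \<longleftrightarrow> is_alg A \<and> (\<exists>x\<in>carrier A. \<exists>y\<in>carrier A. x \<noteq> y) \<and>
     {\<theta>. congruence A \<theta>} = {Id_on (carrier A), carrier A \<times> carrier A}"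

datatype tm = Var nat | Bot | Top | Mt tm tm | Jn tm tm | Pc tm | Ng tm

fun eval :: "('a, 'm) pdm_scheme \<Rightarrow> (nat \<Rightarrow> 'a) \<Rightarrow> tm \<Rightarrow> 'a" where
  "eval A \<sigma> (Var i) = \<sigma> i"
| "eval A \<sigma> Bot = bot A"
| "eval A \<sigma> Top = top A"
| "eval A \<sigma> (Mt s t) = meet A (eval A \<sigma> s) (eval A \<sigma> t)"
| "eval A \<sigma> (Jn s t) = join A (eval A \<sigma> s) (eval A \<sigma> t)"
| "eval A \<sigma> (Pc s) = pc A (eval A \<sigma> s)"
| "eval A \<sigma> (Ng s) = neg A (eval A \<sigma> s)"

definition sat :: "('a, 'm) pdm_scheme \<Rightarrow> tm \<Rightarrow> tm \<Rightarrow> bool" where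
  "sat A s t \<longleftrightarrow> (\<forall>\<sigma>. (\<forall>i. \<sigma> i \<in> carrier A) \<longrightarrow> eval A \<sigma> s = eval A \<sigma> t)"

text \<open>Membership in the variety V(K) generated by K (= Mod Id K, Birkhoff).\<close>
definition in_V :: "'a pdm set \<Rightarrow> 'b pdm \<Rightarrow> bool" where
  "in_V K B \<longleftrightarrow> is_alg B \<and> (\<forall>s t. (\<forall>A\<in>K. sat A s t) \<longrightarrow> sat B s t)"

inductive_set Sg :: "('a, 'm) pdm_scheme \<Rightarrow> 'a set \<Rightarrow> 'a set" for A X where
  gen: "x \<in> X \<Longrightarrow> x \<in> Sg A X"
| bot: "bot A \<in> Sg A X"
| top: "top A \<in> Sg A X"
| meet: "x \<in> Sg A X \<Longrightarrow> y \<in> Sg A X \<Longrightarrow> meet A x y \<in> Sg A X"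
| join: "x \<in> Sg A X \<Longrightarrow> y \<in> Sg A X \<Longrightarrow> join A x y \<in> Sg A X"
| pc: "x \<in> Sg A X \<Longrightarrow> pc A x \<in> Sg A X"
| neg: "x \<in> Sg A X \<Longrightarrow> neg A x \<in> Sg A X"

text \<open>V(K) is locally finite: every finitely generated member is finite. Finitely generated
  algebras are countable, so it suffices (equivalently) to range over algebras carried by nat.\<close>
definition locally_finite :: "'a pdm set \<Rightarrow> bool" where
  "locally_finite K \<longleftrightarrow> (\<forall>B :: nat pdm. in_V K B \<longrightarrow>
     (\<forall>X. finite X \<and> X \<subseteq> carrier B \<and> Sg B X = carrier B \<longrightarrow> finite (carrier B)))"

definition subalg :: "'a pdm \<Rightarrow> 'a pdm \<Rightarrow> bool" where
  "subalg S A \<longleftrightarrow> is_alg S \<and> carrier S \<subseteq> carrier A \<and>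
     bot S = bot A \<and> top S = top A \<and>
     (\<forall>x\<in>carrier S. \<forall>y\<in>carrier S. meet S x y = meet A x y \<and> join S x y = join A x y) \<and>
     (\<forall>x\<in>carrier S. pc S x = pc A x \<and> neg S x = neg A x)"

definition hom :: "('a \<Rightarrow> 'b) \<Rightarrow> 'a pdm \<Rightarrow> 'b pdm \<Rightarrow> bool" where
  "hom h A B \<longleftrightarrow> h ` carrier A \<subseteq> carrier B \<and> h (bot A) = bot B \<and> h (top A) = top B \<and>
     (\<forall>x\<in>carrier A. \<forall>y\<in>carrier A.
        h (meet A x y) = meet B (h x) (h y) \<and> h (join A x y) = join B (h x) (h y)) \<and>
     (\<forall>x\<in>carrier A. h (pc A x) = pc B (h x) \<and> h (neg A x) = neg B (h x))"

definition isomorphic :: "'a pdm \<Rightarrow> 'b pdm \<Rightarrow> bool" where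
  "isomorphic A B \<longleftrightarrow> (\<exists>h. hom h A B \<and> bij_betw h (carrier A) (carrier B))"

end

theory Submission
  imports Defs "HOL-Library.Countable"
begin

text \<open>In an algebra of \<open>M\<^sub>n\<close> every element is determined by its pseudocomplement
  \<open>x*\<close> and its dual pseudocomplement \<open>x\<^sup>+ = x'*'\<close>, so there is a term \<open>eq_test x y\<close> equal to 1
  exactly when \<open>x = y\<close>. In a simple algebra of \<open>M\<^sub>n\<close> the term \<open>top_char n u\<close>, the meet of the
  first \<open>n\<close> iterates of \<open>x \<mapsto> x'*\<close> on \<open>u \<and> u'*\<close>, takes only the values 0 and 1 and is 1
  only at \<open>u = 1\<close>: otherwise the congruence of the filter generated by these iterates would
  be non-trivial. Hence \<open>eq_char x y = top_char n (eq_test x y)\<close> is the characteristic function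
  of equality. The finitely many identities behind this hold in \<open>K\<close>, hence in every simple
  \<open>B \<in> V(K)\<close>, where they make the kernel of \<open>p \<mapsto> p \<and> top_char n u\<close> a congruence, so
  \<open>eq_char\<close> characterises equality in \<open>B\<close> too.

  Now let \<open>B\<close> be finite, enumerated by \<open>m\<close> variables. By local finiteness the \<open>m\<close>-generated free
  algebra of \<open>V(K)\<close> is finite, so finitely many valuations into members of \<open>K\<close> separate all
  \<open>m\<close>-ary terms. If the kernel of none of them were contained in that of the evaluation in
  \<open>B\<close>, the meet of the corresponding terms \<open>(eq_char s t)*\<close> would be 1 in \<open>B\<close> but 0 under every
  separating valuation, hence equal to 0 in \<open>V(K)\<close>, which is absurd. For a valuation whose
  kernel is contained, \<open>eq_char\<close> gives the reverse inclusion, so \<open>B\<close> is isomorphic to the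
  subalgebra it generates.\<close>

lemma congruenceI:
  assumes "equiv (carrier A) \<theta>"
    and "\<And>a b c d. (a, b) \<in> \<theta> \<Longrightarrow> (c, d) \<in> \<theta> \<Longrightarrow> (meet A a c, meet A b d) \<in> \<theta>"
    and "\<And>a b c d. (a, b) \<in> \<theta> \<Longrightarrow> (c, d) \<in> \<theta> \<Longrightarrow> (join A a c, join A b d) \<in> \<theta>"
    and "\<And>a b. (a, b) \<in> \<theta> \<Longrightarrow> (pc A a, pc A b) \<in> \<theta>"
    and "\<And>a b. (a, b) \<in> \<theta> \<Longrightarrow> (neg A a, neg A b) \<in> \<theta>"
  shows "congruence A \<theta>"
  using assms unfolding congruence_def by blast

lemma simple_congruence_cases:
  assumes "simple A" and "congruence A \<theta>"
  obtains "\<theta> = Id_on (carrier A)" | "\<theta> = carrier A \<times> carrier A"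
  using assms unfolding simple_def by blast

section \<open>Algebras of \<open>M\<^sub>n\<close>\<close>

definition dpc :: "('a, 'm) pdm_scheme \<Rightarrow> 'a \<Rightarrow> 'a" where
  "dpc A x = neg A (pc A (neg A x))"

fun meet_iter :: "('a, 'm) pdm_scheme \<Rightarrow> nat \<Rightarrow> 'a \<Rightarrow> 'a" where
  "meet_iter A 0 y = y"
| "meet_iter A (Suc k) y = meet A (meet_iter A k y) (iter_ns A (Suc k) y)"

definition top_char :: "('a, 'm) pdm_scheme \<Rightarrow> nat \<Rightarrow> 'a \<Rightarrow> 'a" where
  "top_char A k u = meet_iter A k (meet A u (pc A (neg A u)))"

text \<open>\<open>a* = b*\<close> iff the first two meetands are 1, and \<open>a\<^sup>+ = b\<^sup>+\<close> iff the last two are.\<close>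

definition eq_test :: "('a, 'm) pdm_scheme \<Rightarrow> 'a \<Rightarrow> 'a \<Rightarrow> 'a" where
  "eq_test A a b = meet A (meet A (pc A (meet A (pc A a) b)) (pc A (meet A (pc A b) a)))
      (meet A (join A (dpc A a) b) (join A (dpc A b) a))"

definition eq_char :: "('a, 'm) pdm_scheme \<Rightarrow> nat \<Rightarrow> 'a \<Rightarrow> 'a \<Rightarrow> 'a" where
  "eq_char A k a b = top_char A k (eq_test A a b)"

lemma iter_ns_0 [simp]: "iter_ns A 0 x = x"
  by (simp add: iter_ns_def)

lemma iter_ns_Suc [simp]: "iter_ns A (Suc k) x = pc A (neg A (iter_ns A k x))"
  by (simp add: iter_ns_def)

locale pdm_alg =
  fixes A :: "('a, 'm) pdm_scheme"
  assumes alg: "is_alg A"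
begin

lemma closed [simp]:
  "bot A \<in> carrier A" "top A \<in> carrier A"
  "x \<in> carrier A \<Longrightarrow> y \<in> carrier A \<Longrightarrow> meet A x y \<in> carrier A"
  "x \<in> carrier A \<Longrightarrow> y \<in> carrier A \<Longrightarrow> join A x y \<in> carrier A"
  "x \<in> carrier A \<Longrightarrow> pc A x \<in> carrier A"
  "x \<in> carrier A \<Longrightarrow> neg A x \<in> carrier A"
  using alg by (auto simp: is_alg_def)

lemma dpc_closed [simp]: "x \<in> carrier A \<Longrightarrow> dpc A x \<in> carrier A"
  by (simp add: dpc_def)

lemma iter_ns_closed [simp]: "x \<in> carrier A \<Longrightarrow> iter_ns A k x \<in> carrier A"
  by (induct k) auto

lemma meet_iter_closed [simp]: "x \<in> carrier A \<Longrightarrow> meet_iter A k x \<in> carrier A"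
  by (induct k) auto

lemma top_char_closed [simp]: "x \<in> carrier A \<Longrightarrow> top_char A k x \<in> carrier A"
  by (simp add: top_char_def)

lemma eq_test_closed [simp]: "x \<in> carrier A \<Longrightarrow> y \<in> carrier A \<Longrightarrow> eq_test A x y \<in> carrier A"
  by (simp add: eq_test_def)

lemma eq_char_closed [simp]: "x \<in> carrier A \<Longrightarrow> y \<in> carrier A \<Longrightarrow> eq_char A k x y \<in> carrier A"
  by (simp add: eq_char_def)

lemma eval_closed [simp]: "(\<And>i. \<sigma> i \<in> carrier A) \<Longrightarrow> eval A \<sigma> t \<in> carrier A"
  by (induct t) auto

end

locale Mn_algebra =
  fixes A :: "('a, 'm) pdm_scheme" and n :: nat
  assumes Mn: "M n A"

sublocale Mn_algebra \<subseteq> pdm_alg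
  using Mn by unfold_locales (simp add: M_def)

context Mn_algebra
begin

lemma meet_assoc:
  "x \<in> carrier A \<Longrightarrow> y \<in> carrier A \<Longrightarrow> z \<in> carrier A \<Longrightarrow>
   meet A (meet A x y) z = meet A x (meet A y z)"
  using Mn unfolding M_def by blast

lemma meet_join_distrib:
  "x \<in> carrier A \<Longrightarrow> y \<in> carrier A \<Longrightarrow> z \<in> carrier A \<Longrightarrow>
   meet A x (join A y z) = join A (meet A x y) (meet A x z)"
  using Mn unfolding M_def by blast

lemma meet_comm: "x \<in> carrier A \<Longrightarrow> y \<in> carrier A \<Longrightarrow> meet A x y = meet A y x"
  using Mn unfolding M_def by blast

lemma join_comm: "x \<in> carrier A \<Longrightarrow> y \<in> carrier A \<Longrightarrow> join A x y = join A y x"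
  using Mn unfolding M_def by blast

lemma meet_join_absorb: "x \<in> carrier A \<Longrightarrow> y \<in> carrier A \<Longrightarrow> meet A x (join A x y) = x"
  using Mn unfolding M_def by blast

lemma join_meet_absorb: "x \<in> carrier A \<Longrightarrow> y \<in> carrier A \<Longrightarrow> join A x (meet A x y) = x"
  using Mn unfolding M_def by blast

lemma meet_eq_bot_iff_le_pc:
  "x \<in> carrier A \<Longrightarrow> y \<in> carrier A \<Longrightarrow> meet A x y = bot A \<longleftrightarrow> le A y (pc A x)"
  using Mn unfolding M_def by blast

lemma neg_join:
  "x \<in> carrier A \<Longrightarrow> y \<in> carrier A \<Longrightarrow> neg A (join A x y) = meet A (neg A x) (neg A y)"
  using Mn unfolding M_def by blast

lemma neg_meet:
  "x \<in> carrier A \<Longrightarrow> y \<in> carrier A \<Longrightarrow> neg A (meet A x y) = join A (neg A x) (neg A y)"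
  using Mn unfolding M_def by blast

lemma neg_neg [simp]: "x \<in> carrier A \<Longrightarrow> neg A (neg A x) = x"
  using Mn unfolding M_def by blast

lemma neg_bot [simp]: "neg A (bot A) = top A"
  using Mn unfolding M_def by blast

lemma meet_bot_left [simp]: "x \<in> carrier A \<Longrightarrow> meet A (bot A) x = bot A"
  using Mn unfolding M_def by blast

lemma meet_top_left [simp]: "x \<in> carrier A \<Longrightarrow> meet A (top A) x = x"
  using Mn unfolding M_def by blast

lemma meet_dpc_le_join_pc:
  "x \<in> carrier A \<Longrightarrow> y \<in> carrier A \<Longrightarrow> le A (meet A x (dpc A x)) (join A y (pc A y))"
  using Mn unfolding M_def dpc_def by blast

lemma iter_ns_stable_Suc:
  "x \<in> carrier A \<Longrightarrow>
   iter_ns A (Suc n) (meet A x (pc A (neg A x))) = iter_ns A n (meet A x (pc A (neg A x)))"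
  using Mn unfolding M_def by (metis iter_ns_def)

lemma meet_bot_right [simp]: "x \<in> carrier A \<Longrightarrow> meet A x (bot A) = bot A"
  using meet_comm[of x "bot A"] by simp

lemma meet_top_right [simp]: "x \<in> carrier A \<Longrightarrow> meet A x (top A) = x"
  using meet_comm[of x "top A"] by simp

lemma meet_idem [simp]: "x \<in> carrier A \<Longrightarrow> meet A x x = x"
  using meet_join_absorb[of x "meet A x x"] join_meet_absorb[of x x] by simp

lemma join_bot_right [simp]: "x \<in> carrier A \<Longrightarrow> join A x (bot A) = x"
  using join_meet_absorb[of x "bot A"] by simp

lemma neg_top [simp]: "neg A (top A) = bot A"
  using neg_neg[of "bot A"] by simp

lemma meet_join_distrib_right:
  "x \<in> carrier A \<Longrightarrow> y \<in> carrier A \<Longrightarrow> z \<in> carrier A \<Longrightarrow>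
   meet A (join A y z) x = join A (meet A y x) (meet A z x)"
  by (simp add: meet_comm[of "join A y z" x] meet_join_distrib meet_comm[of x y] meet_comm[of x z])

lemma meet_left_commute:
  "x \<in> carrier A \<Longrightarrow> y \<in> carrier A \<Longrightarrow> z \<in> carrier A \<Longrightarrow>
   meet A x (meet A y z) = meet A y (meet A x z)"
  by (simp add: meet_assoc[symmetric] meet_comm[of x y])

lemma meet_meet_distrib:
  "x \<in> carrier A \<Longrightarrow> y \<in> carrier A \<Longrightarrow> z \<in> carrier A \<Longrightarrow>
   meet A (meet A x y) z = meet A (meet A x z) (meet A y z)"
  by (simp add: meet_assoc meet_left_commute[of z y z])

lemma meet_pc [simp]: "x \<in> carrier A \<Longrightarrow> meet A x (pc A x) = bot A"
  using meet_eq_bot_iff_le_pc[of x "pc A x"] by (simp add: le_def)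

lemma pc_meet [simp]: "x \<in> carrier A \<Longrightarrow> meet A (pc A x) x = bot A"
  using meet_comm[of x "pc A x"] by simp

lemma pc_top [simp]: "pc A (top A) = bot A"
  by (metis closed(2,5) meet_pc meet_top_left)

lemma pc_bot [simp]: "pc A (bot A) = top A"
  using meet_eq_bot_iff_le_pc[of "bot A" "top A"] by (simp add: le_def)

lemma le_reflexive [simp]: "x \<in> carrier A \<Longrightarrow> le A x x"
  by (simp add: le_def)

lemma le_transitive:
  "x \<in> carrier A \<Longrightarrow> y \<in> carrier A \<Longrightarrow> z \<in> carrier A \<Longrightarrow> le A x y \<Longrightarrow> le A y z \<Longrightarrow> le A x z"
  unfolding le_def using meet_assoc[of x y z] by simp

lemma le_antisymmetric: "x \<in> carrier A \<Longrightarrow> y \<in> carrier A \<Longrightarrow> le A x y \<Longrightarrow> le A y x \<Longrightarrow> x = y"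
  unfolding le_def using meet_comm[of x y] by simp

lemma meet_below_left [simp]: "x \<in> carrier A \<Longrightarrow> y \<in> carrier A \<Longrightarrow> le A (meet A x y) x"
  unfolding le_def by (simp add: meet_comm[of "meet A x y" x] meet_assoc[symmetric])

lemma meet_below_right [simp]: "x \<in> carrier A \<Longrightarrow> y \<in> carrier A \<Longrightarrow> le A (meet A x y) y"
  unfolding le_def by (simp add: meet_assoc)

lemma below_meetI:
  "x \<in> carrier A \<Longrightarrow> y \<in> carrier A \<Longrightarrow> z \<in> carrier A \<Longrightarrow> le A z x \<Longrightarrow> le A z y \<Longrightarrow>
   le A z (meet A x y)"
  unfolding le_def using meet_assoc[of z x y] by simp

lemma join_above_left [simp]: "x \<in> carrier A \<Longrightarrow> y \<in> carrier A \<Longrightarrow> le A x (join A x y)"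
  unfolding le_def by (simp add: meet_join_absorb)

lemma join_above_right [simp]: "x \<in> carrier A \<Longrightarrow> y \<in> carrier A \<Longrightarrow> le A y (join A x y)"
  using join_above_left[of y x] by (simp add: join_comm)

lemma join_belowI:
  "x \<in> carrier A \<Longrightarrow> y \<in> carrier A \<Longrightarrow> z \<in> carrier A \<Longrightarrow> le A x z \<Longrightarrow> le A y z \<Longrightarrow>
   le A (join A x y) z"
  unfolding le_def by (simp add: meet_join_distrib_right)

lemma below_top [simp]: "x \<in> carrier A \<Longrightarrow> le A x (top A)"
  by (simp add: le_def)

lemma below_botD: "x \<in> carrier A \<Longrightarrow> le A x (bot A) \<Longrightarrow> x = bot A"
  by (simp add: le_def)

lemma top_belowD: "x \<in> carrier A \<Longrightarrow> le A (top A) x \<Longrightarrow> x = top A"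
  by (simp add: le_def)

lemma meet_mono_left:
  "x \<in> carrier A \<Longrightarrow> y \<in> carrier A \<Longrightarrow> z \<in> carrier A \<Longrightarrow> le A x y \<Longrightarrow>
   le A (meet A x z) (meet A y z)"
  by (meson below_meetI closed(3) le_transitive meet_below_left meet_below_right)

lemma meet_eq_topD:
  "x \<in> carrier A \<Longrightarrow> y \<in> carrier A \<Longrightarrow> meet A x y = top A \<Longrightarrow> x = top A \<and> y = top A"
  by (metis meet_below_left meet_below_right top_belowD)

lemma pc_eq_topD: "x \<in> carrier A \<Longrightarrow> pc A x = top A \<Longrightarrow> x = bot A"
  using meet_pc[of x] by simp

lemma pc_antimono: "x \<in> carrier A \<Longrightarrow> y \<in> carrier A \<Longrightarrow> le A x y \<Longrightarrow> le A (pc A y) (pc A x)"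
  by (metis closed(5) meet_assoc meet_eq_bot_iff_le_pc meet_bot_right meet_pc le_def)

lemma neg_antimono: "x \<in> carrier A \<Longrightarrow> y \<in> carrier A \<Longrightarrow> le A x y \<Longrightarrow> le A (neg A y) (neg A x)"
  by (metis closed(6) join_comm le_def meet_join_absorb neg_meet)

lemma pc_neg_mono:
  "x \<in> carrier A \<Longrightarrow> y \<in> carrier A \<Longrightarrow> le A x y \<Longrightarrow> le A (pc A (neg A x)) (pc A (neg A y))"
  by (simp add: neg_antimono pc_antimono)

lemma pc_join: "x \<in> carrier A \<Longrightarrow> y \<in> carrier A \<Longrightarrow> pc A (join A x y) = meet A (pc A x) (pc A y)"
proof (rule le_antisymmetric)
  assume x: "x \<in> carrier A" and y: "y \<in> carrier A"
  show "le A (pc A (join A x y)) (meet A (pc A x) (pc A y))"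
    using x y by (intro below_meetI pc_antimono) simp_all
  have "meet A x (meet A (pc A x) (pc A y)) = bot A"
    using x y by (simp add: meet_assoc[symmetric])
  moreover have "meet A y (meet A (pc A x) (pc A y)) = bot A"
    using x y by (simp add: meet_left_commute[of y "pc A x"])
  ultimately have "meet A (join A x y) (meet A (pc A x) (pc A y)) = bot A"
    using x y by (simp add: meet_join_distrib_right)
  then show "le A (meet A (pc A x) (pc A y)) (pc A (join A x y))"
    using x y meet_eq_bot_iff_le_pc by simp
qed simp_all

lemma pc_neg_meet:
  "x \<in> carrier A \<Longrightarrow> y \<in> carrier A \<Longrightarrow>
   pc A (neg A (meet A x y)) = meet A (pc A (neg A x)) (pc A (neg A y))"
  by (simp add: neg_meet pc_join)

lemma pc_meet_meet:
  "a \<in> carrier A \<Longrightarrow> f \<in> carrier A \<Longrightarrow> meet A (pc A (meet A a f)) f = meet A (pc A a) f"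
proof (rule le_antisymmetric)
  assume a: "a \<in> carrier A" and f: "f \<in> carrier A"
  show "le A (meet A (pc A a) f) (meet A (pc A (meet A a f)) f)"
    using a f by (intro meet_mono_left pc_antimono) simp_all
  have "meet A a (meet A (pc A (meet A a f)) f) = bot A"
    using a f by (simp add: meet_comm[of "pc A (meet A a f)" f] meet_assoc[symmetric])
  then show "le A (meet A (pc A (meet A a f)) f) (meet A (pc A a) f)"
    using a f meet_eq_bot_iff_le_pc by (intro below_meetI) simp_all
qed simp_all

lemma neg_meet_meet_pc_neg:
  "a \<in> carrier A \<Longrightarrow> f \<in> carrier A \<Longrightarrow>
   meet A (neg A (meet A a f)) (pc A (neg A f)) = meet A (neg A a) (pc A (neg A f))"
  by (simp add: neg_meet meet_join_distrib_right)

lemma join_dpc [simp]: "a \<in> carrier A \<Longrightarrow> join A a (dpc A a) = top A"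
  using neg_meet[of "neg A a" "pc A (neg A a)"] by (simp add: dpc_def)

lemma le_if_pc_dpc_eq:
  assumes a: "a \<in> carrier A" and b: "b \<in> carrier A"
    and pc_eq: "pc A a = pc A b" and dpc_eq: "dpc A a = dpc A b"
  shows "le A a b"
proof -
  have a_eq: "a = join A (meet A a b) (meet A a (dpc A a))"
    using meet_join_distrib[of a b "dpc A b"] a b dpc_eq by simp
  have "le A (meet A a (dpc A a)) (meet A a (join A b (pc A a)))"
    using a b pc_eq meet_dpc_le_join_pc[of a b] by (intro below_meetI) simp_all
  also have "meet A a (join A b (pc A a)) = meet A a b"
    using a b by (simp add: meet_join_distrib)
  finally have "le A (join A (meet A a b) (meet A a (dpc A a))) (meet A a b)"
    using a b by (intro join_belowI) simp_all
  then have "le A a (meet A a b)" using a_eq by simp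
  then show ?thesis using a b le_transitive[of a "meet A a b" b] by simp
qed

lemma meet_iter_le_iter_ns: "y \<in> carrier A \<Longrightarrow> le A (meet_iter A k y) (iter_ns A k y)"
  by (cases k) simp_all

lemma meet_iter_antimono:
  assumes y: "y \<in> carrier A" and "j \<le> k"
  shows "le A (meet_iter A k y) (meet_iter A j y)"
  using \<open>j \<le> k\<close>
proof (induct k rule: dec_induct)
  case (step k)
  then show ?case
    using y le_transitive[of "meet_iter A (Suc k) y" "meet_iter A k y" "meet_iter A j y"] by simp
qed (simp add: y)

lemma meet_iter_Suc_le_pc_neg:
  "y \<in> carrier A \<Longrightarrow> le A (meet_iter A (Suc k) y) (pc A (neg A (meet_iter A k y)))"
proof (induct k)
  case (Suc k)
  then have "le A (meet_iter A (Suc (Suc k)) y)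
      (meet A (pc A (neg A (meet_iter A k y))) (iter_ns A (Suc (Suc k)) y))"
    by (simp only: meet_iter.simps(2)[of A "Suc k"]) (rule meet_mono_left, simp_all)
  then show ?case using Suc by (simp add: pc_neg_meet)
qed simp

lemma iter_ns_stable:
  assumes u: "u \<in> carrier A" and "n \<le> k"
  shows "iter_ns A k (meet A u (pc A (neg A u))) = iter_ns A n (meet A u (pc A (neg A u)))"
  using \<open>n \<le> k\<close>
proof (induct k rule: dec_induct)
  case (step k)
  then show ?case using iter_ns_stable_Suc[OF u] by simp
qed simp

lemma meet_iter_stable:
  assumes u: "u \<in> carrier A" and "n \<le> k"
  shows "meet_iter A k (meet A u (pc A (neg A u))) = meet_iter A n (meet A u (pc A (neg A u)))"
  using \<open>n \<le> k\<close>
proof (induct k rule: dec_induct)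
  case (step k)
  let ?y = "meet A u (pc A (neg A u))"
  have "iter_ns A (Suc k) ?y = iter_ns A k ?y"
    using iter_ns_stable[OF u, of k] iter_ns_stable[OF u, of "Suc k"] step(1) by simp
  then have "le A (meet_iter A k ?y) (iter_ns A (Suc k) ?y)"
    using meet_iter_le_iter_ns[of ?y k] u by simp
  then show ?case using step by (simp add: le_def)
qed simp

lemma top_char_le_meet_iter:
  assumes u: "u \<in> carrier A"
  shows "le A (top_char A n u) (meet_iter A k (meet A u (pc A (neg A u))))"
proof (cases "n \<le> k")
  case True
  then show ?thesis using u meet_iter_stable[OF u True] by (simp add: top_char_def)
next
  case False
  then show ?thesis using u meet_iter_antimono[of _ k n] by (simp add: top_char_def)
qed

lemma top_char_le: "u \<in> carrier A \<Longrightarrow> le A (top_char A k u) u"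
proof -
  assume u: "u \<in> carrier A"
  let ?y = "meet A u (pc A (neg A u))"
  have "le A (meet_iter A k ?y) (meet_iter A 0 ?y)"
    using u meet_iter_antimono[of ?y 0 k] by simp
  then have "le A (meet_iter A k ?y) ?y" by simp
  then show ?thesis
    unfolding top_char_def using u le_transitive[of "meet_iter A k ?y" ?y u] by simp
qed

lemma iter_ns_top [simp]: "iter_ns A k (top A) = top A"
  by (induct k) simp_all

lemma meet_iter_top [simp]: "meet_iter A k (top A) = top A"
  by (induct k) simp_all

lemma top_char_top [simp]: "top_char A k (top A) = top A"
  by (simp add: top_char_def)

lemma eq_test_self [simp]: "a \<in> carrier A \<Longrightarrow> eq_test A a a = top A"
  using join_dpc[of a] join_comm[of a "dpc A a"] by (simp add: eq_test_def)

lemma eq_char_self [simp]: "a \<in> carrier A \<Longrightarrow> eq_char A k a a = top A"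
  by (simp add: eq_char_def)

lemma dpc_le_if_join_eq_top:
  assumes a: "a \<in> carrier A" and b: "b \<in> carrier A" and "join A (dpc A a) b = top A"
  shows "le A (dpc A b) (dpc A a)"
proof -
  have "meet A (neg A b) (pc A (neg A a)) = bot A"
    using assms neg_join[of "dpc A a" b] meet_comm[of "neg A b"] by (simp add: dpc_def)
  then have "le A (pc A (neg A a)) (pc A (neg A b))"
    using a b meet_eq_bot_iff_le_pc by simp
  then show ?thesis using a b neg_antimono by (simp add: dpc_def)
qed

lemma pc_le_if_pc_meet_eq_top:
  "a \<in> carrier A \<Longrightarrow> b \<in> carrier A \<Longrightarrow> pc A (meet A (pc A a) b) = top A \<Longrightarrow>
   le A (pc A a) (pc A b)"
  using pc_eq_topD[of "meet A (pc A a) b"] meet_comm[of "pc A a" b]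
    meet_eq_bot_iff_le_pc[of b "pc A a"] by simp

lemma eq_test_eq_topD:
  assumes a: "a \<in> carrier A" and b: "b \<in> carrier A" and "eq_test A a b = top A"
  shows "a = b"
proof -
  let ?p = "meet A (pc A (meet A (pc A a) b)) (pc A (meet A (pc A b) a))"
  let ?q = "meet A (join A (dpc A a) b) (join A (dpc A b) a)"
  have "?p = top A" "?q = top A"
    using assms meet_eq_topD[of ?p ?q] by (simp_all add: eq_test_def)
  then have tops: "pc A (meet A (pc A a) b) = top A" "pc A (meet A (pc A b) a) = top A"
    "join A (dpc A a) b = top A" "join A (dpc A b) a = top A"
    using a b meet_eq_topD[of "pc A (meet A (pc A a) b)" "pc A (meet A (pc A b) a)"]
      meet_eq_topD[of "join A (dpc A a) b" "join A (dpc A b) a"] by simp_all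
  have "pc A a = pc A b"
    by (rule le_antisymmetric) (simp_all add: a b tops pc_le_if_pc_meet_eq_top)
  moreover have "dpc A a = dpc A b"
    by (rule le_antisymmetric) (simp_all add: a b tops dpc_le_if_join_eq_top)
  ultimately have "le A a b" "le A b a"
    using a b le_if_pc_dpc_eq by simp_all
  then show ?thesis by (rule le_antisymmetric[OF a b])
qed

lemma eq_char_eq_topD:
  assumes a: "a \<in> carrier A" and b: "b \<in> carrier A" and "eq_char A k a b = top A"
  shows "a = b"
proof -
  have "le A (top A) (eq_test A a b)"
    using assms top_char_le[of "eq_test A a b" k] by (simp add: eq_char_def)
  then have "eq_test A a b = top A" by (rule top_belowD[rotated]) (simp add: a b)
  then show ?thesis by (rule eq_test_eq_topD[OF a b])
qed

text \<open>\<open>a\<close> and \<open>b\<close> are related when they agree below some element of the filter generated by the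
  iterates of \<open>x \<mapsto> x'*\<close> on \<open>y\<close>; that the filter is closed under \<open>x \<mapsto> x'*\<close> is what makes the
  relation compatible with \<open>'\<close>.\<close>

definition iter_filter where
  "iter_filter y = {a \<in> carrier A. \<exists>k. le A (meet_iter A k y) a}"

definition filter_cong where
  "filter_cong y =
     {(a, b). a \<in> carrier A \<and> b \<in> carrier A \<and> (\<exists>f \<in> iter_filter y. meet A a f = meet A b f)}"

lemma iter_filter_top: "y \<in> carrier A \<Longrightarrow> top A \<in> iter_filter y"
  unfolding iter_filter_def by auto

lemma iter_filter_meet:
  assumes y: "y \<in> carrier A" and "f \<in> iter_filter y" "g \<in> iter_filter y"
  shows "meet A f g \<in> iter_filter y"
proof -
  obtain j k where f: "f \<in> carrier A" "le A (meet_iter A j y) f"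
    and g: "g \<in> carrier A" "le A (meet_iter A k y) g"
    using assms unfolding iter_filter_def by auto
  have "le A (meet_iter A (max j k) y) (meet_iter A j y)"
    "le A (meet_iter A (max j k) y) (meet_iter A k y)"
    using y by (simp_all add: meet_iter_antimono)
  then have "le A (meet_iter A (max j k) y) f" "le A (meet_iter A (max j k) y) g"
    using f g y le_transitive[of "meet_iter A (max j k) y" "meet_iter A j y" f]
      le_transitive[of "meet_iter A (max j k) y" "meet_iter A k y" g] by simp_all
  then have "le A (meet_iter A (max j k) y) (meet A f g)"
    using f g y by (intro below_meetI) simp_all
  then show ?thesis using f g unfolding iter_filter_def by auto
qed

lemma iter_filter_pc_neg:
  assumes y: "y \<in> carrier A" and "f \<in> iter_filter y"
  shows "pc A (neg A f) \<in> iter_filter y"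
proof -
  obtain k where f: "f \<in> carrier A" "le A (meet_iter A k y) f"
    using assms unfolding iter_filter_def by auto
  have "le A (meet_iter A (Suc k) y) (pc A (neg A (meet_iter A k y)))"
    using y by (rule meet_iter_Suc_le_pc_neg)
  moreover have "le A (pc A (neg A (meet_iter A k y))) (pc A (neg A f))"
    using f y by (simp add: pc_neg_mono)
  ultimately have "le A (meet_iter A (Suc k) y) (pc A (neg A f))"
    by (rule le_transitive[rotated 3]) (simp_all add: f y del: meet_iter.simps)
  then show ?thesis using f closed(5,6) unfolding iter_filter_def by blast
qed

lemma meet_eq_meet_refine:
  "a \<in> carrier A \<Longrightarrow> b \<in> carrier A \<Longrightarrow> f \<in> carrier A \<Longrightarrow> g \<in> carrier A \<Longrightarrow>
   meet A a f = meet A b f \<Longrightarrow> meet A a (meet A f g) = meet A b (meet A f g)"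
  by (simp add: meet_assoc[symmetric])

lemma iter_filter_carrier: "f \<in> iter_filter y \<Longrightarrow> f \<in> carrier A"
  unfolding iter_filter_def by simp

lemma filter_cong_carrier: "(a, b) \<in> filter_cong y \<Longrightarrow> a \<in> carrier A \<and> b \<in> carrier A"
  unfolding filter_cong_def by simp

lemma filter_cong_common_witness:
  assumes y: "y \<in> carrier A" and "(a, b) \<in> filter_cong y" "(c, d) \<in> filter_cong y"
  shows "\<exists>h \<in> iter_filter y. meet A a h = meet A b h \<and> meet A c h = meet A d h"
proof -
  obtain f g where fg: "f \<in> iter_filter y" "g \<in> iter_filter y"
    "meet A a f = meet A b f" "meet A c g = meet A d g"
    and "a \<in> carrier A" "b \<in> carrier A" "c \<in> carrier A" "d \<in> carrier A"
    using assms(2,3) unfolding filter_cong_def by auto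
  moreover have "f \<in> carrier A" "g \<in> carrier A" using fg iter_filter_carrier by auto
  ultimately have "meet A a (meet A f g) = meet A b (meet A f g)"
    "meet A c (meet A f g) = meet A d (meet A f g)"
    using meet_eq_meet_refine[of a b f g] meet_eq_meet_refine[of c d g f] meet_comm[of f g]
    by simp_all
  then show ?thesis using iter_filter_meet[OF y fg(1,2)] by blast
qed

lemma equiv_filter_cong:
  assumes y: "y \<in> carrier A"
  shows "equiv (carrier A) (filter_cong y)"
proof -
  have "filter_cong y \<subseteq> carrier A \<times> carrier A"
    unfolding filter_cong_def by auto
  moreover have "refl_on (carrier A) (filter_cong y)"
    unfolding refl_on_def filter_cong_def using iter_filter_top[OF y] by auto
  moreover have "sym (filter_cong y)"
    unfolding sym_def filter_cong_def by auto metis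
  moreover have "trans (filter_cong y)"
  proof (rule transI)
    fix a b c assume ab: "(a, b) \<in> filter_cong y" and bc: "(b, c) \<in> filter_cong y"
    then obtain h where "h \<in> iter_filter y" "meet A a h = meet A b h" "meet A b h = meet A c h"
      using filter_cong_common_witness[OF y] by blast
    then show "(a, c) \<in> filter_cong y"
      using filter_cong_carrier[OF ab] filter_cong_carrier[OF bc] unfolding filter_cong_def by auto
  qed
  ultimately show ?thesis unfolding equiv_def by blast
qed

lemma congruence_filter_cong:
  assumes y: "y \<in> carrier A"
  shows "congruence A (filter_cong y)"
proof (rule congruenceI)
  show "equiv (carrier A) (filter_cong y)" using y by (rule equiv_filter_cong)
next
  fix a b c d assume ab: "(a, b) \<in> filter_cong y" and cd: "(c, d) \<in> filter_cong y"
  then obtain h where h: "h \<in> iter_filter y" "h \<in> carrier A"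
    "meet A a h = meet A b h" "meet A c h = meet A d h"
    using filter_cong_common_witness[OF y] iter_filter_carrier by blast
  have carriers: "a \<in> carrier A" "b \<in> carrier A" "c \<in> carrier A" "d \<in> carrier A"
    using filter_cong_carrier ab cd by auto
  have "meet A (meet A a c) h = meet A (meet A b d) h"
    using h carriers meet_meet_distrib[of a c h] meet_meet_distrib[of b d h] by simp
  then show "(meet A a c, meet A b d) \<in> filter_cong y"
    using h carriers unfolding filter_cong_def by auto
  have "meet A (join A a c) h = meet A (join A b d) h"
    using h carriers by (simp add: meet_join_distrib_right)
  then show "(join A a c, join A b d) \<in> filter_cong y"
    using h carriers unfolding filter_cong_def by auto
next
  fix a b assume ab: "(a, b) \<in> filter_cong y"
  then obtain f where f: "f \<in> iter_filter y" "meet A a f = meet A b f"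
    and carriers: "a \<in> carrier A" "b \<in> carrier A" "f \<in> carrier A"
    using iter_filter_carrier unfolding filter_cong_def by auto
  have "meet A (pc A a) f = meet A (pc A b) f"
    using f carriers pc_meet_meet[of a f] pc_meet_meet[of b f] by simp
  then show "(pc A a, pc A b) \<in> filter_cong y"
    using f carriers unfolding filter_cong_def by auto
  have "meet A (neg A a) (pc A (neg A f)) = meet A (neg A b) (pc A (neg A f))"
    using f carriers neg_meet_meet_pc_neg[of a f] neg_meet_meet_pc_neg[of b f] by simp
  then show "(neg A a, neg A b) \<in> filter_cong y"
    using f carriers iter_filter_pc_neg[OF y] unfolding filter_cong_def by auto
qed

end

section \<open>Simple algebras of \<open>M\<^sub>n\<close>\<close>

locale simple_Mn_algebra = Mn_algebra +
  assumes simple: "simple A"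
begin

lemma top_char_bot_or_top:
  assumes u: "u \<in> carrier A"
  shows "top_char A n u = bot A \<or> top_char A n u = top A"
proof -
  let ?y = "meet A u (pc A (neg A u))"
  have y: "?y \<in> carrier A" using u by simp
  show ?thesis
  proof (cases rule: simple_congruence_cases[OF simple congruence_filter_cong[OF y]])
    case 1
    have "le A (meet_iter A 0 ?y) ?y" using y by simp
    then have "?y \<in> iter_filter ?y" using y unfolding iter_filter_def by blast
    moreover have "meet A ?y ?y = meet A (top A) ?y" using y by simp
    ultimately have "(?y, top A) \<in> filter_cong ?y"
      using y closed(2) unfolding filter_cong_def by blast
    then have "?y = top A" unfolding 1 by (simp only: Id_on_iff)
    then show ?thesis by (simp add: top_char_def)
  next
    case 2
    then have "(bot A, top A) \<in> filter_cong ?y" by simp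
    then obtain f k where "f \<in> carrier A" "meet A (bot A) f = meet A (top A) f"
        "le A (meet_iter A k ?y) f"
      unfolding filter_cong_def iter_filter_def by blast
    then have "le A (meet_iter A k ?y) (bot A)" by simp
    then have "le A (top_char A n u) (bot A)"
      using u top_char_le_meet_iter[OF u, of k]
        le_transitive[of "top_char A n u" "meet_iter A k ?y" "bot A"] by simp
    then show ?thesis using u below_botD[of "top_char A n u"] by simp
  qed
qed

lemma eq_char_bot_or_top:
  "a \<in> carrier A \<Longrightarrow> b \<in> carrier A \<Longrightarrow> eq_char A n a b = bot A \<or> eq_char A n a b = top A"
  unfolding eq_char_def by (rule top_char_bot_or_top) simp

lemma meet_eq_char_absorb:
  "a \<in> carrier A \<Longrightarrow> b \<in> carrier A \<Longrightarrow> meet A a (eq_char A n a b) = meet A b (eq_char A n a b)"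
proof -
  assume a: "a \<in> carrier A" and b: "b \<in> carrier A"
  show ?thesis
  proof (cases "eq_char A n a b = top A")
    case True
    then have "a = b" by (rule eq_char_eq_topD[OF a b])
    then show ?thesis by simp
  next
    case False
    then show ?thesis using a b eq_char_bot_or_top[OF a b] by simp
  qed
qed

lemma neg_meet_top_char:
  "a \<in> carrier A \<Longrightarrow> u \<in> carrier A \<Longrightarrow>
   meet A (neg A a) (top_char A n u) = meet A (neg A (meet A a (top_char A n u))) (top_char A n u)"
  using top_char_bot_or_top[of u] by auto

end

section \<open>Simple algebras in \<open>V(K)\<close>\<close>

definition ns_tm :: "tm \<Rightarrow> tm" where
  "ns_tm t = Pc (Ng t)"

fun meet_iter_tm :: "nat \<Rightarrow> tm \<Rightarrow> tm" where
  "meet_iter_tm 0 y = y"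
| "meet_iter_tm (Suc k) y = Mt (meet_iter_tm k y) ((ns_tm ^^ Suc k) y)"

definition top_char_tm :: "nat \<Rightarrow> tm \<Rightarrow> tm" where
  "top_char_tm k u = meet_iter_tm k (Mt u (Pc (Ng u)))"

definition eq_test_tm :: "tm \<Rightarrow> tm \<Rightarrow> tm" where
  "eq_test_tm a b = Mt (Mt (Pc (Mt (Pc a) b)) (Pc (Mt (Pc b) a)))
      (Mt (Jn (Ng (Pc (Ng a))) b) (Jn (Ng (Pc (Ng b))) a))"

definition eq_char_tm :: "nat \<Rightarrow> tm \<Rightarrow> tm \<Rightarrow> tm" where
  "eq_char_tm k a b = top_char_tm k (eq_test_tm a b)"

lemma eval_ns_tm_iter: "eval A \<sigma> ((ns_tm ^^ k) t) = iter_ns A k (eval A \<sigma> t)"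
  by (induct k) (simp_all add: ns_tm_def)

lemma eval_meet_iter_tm: "eval A \<sigma> (meet_iter_tm k t) = meet_iter A k (eval A \<sigma> t)"
  by (induct k) (simp_all add: eval_ns_tm_iter del: funpow.simps)

lemma eval_top_char_tm [simp]: "eval A \<sigma> (top_char_tm k u) = top_char A k (eval A \<sigma> u)"
  by (simp add: top_char_tm_def top_char_def eval_meet_iter_tm)

lemma eval_eq_char_tm [simp]: "eval A \<sigma> (eq_char_tm k a b) = eq_char A k (eval A \<sigma> a) (eval A \<sigma> b)"
  by (simp add: eq_char_tm_def eq_char_def eq_test_tm_def eq_test_def dpc_def)

abbreviation "x\<^sub>0 \<equiv> Var 0"
abbreviation "x\<^sub>1 \<equiv> Var 1"
abbreviation "x\<^sub>2 \<equiv> Var 2"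

text \<open>These are identities of the simple algebras of \<open>M\<^sub>n\<close> only, not of \<open>M\<^sub>n\<close>: several of them
  use that \<open>top_char\<close> takes just the values 0 and 1.\<close>

definition simple_Mn_identities :: "nat \<Rightarrow> (tm \<times> tm) set" where
  "simple_Mn_identities n =
    {(Mt x\<^sub>0 Top, x\<^sub>0), (Mt x\<^sub>0 Bot, Bot), (Mt Top x\<^sub>0, x\<^sub>0), (Mt Bot x\<^sub>0, Bot), (Mt x\<^sub>0 x\<^sub>0, x\<^sub>0),
     (Pc Bot, Top),
     (Mt (Mt x\<^sub>0 x\<^sub>1) x\<^sub>2, Mt (Mt x\<^sub>0 x\<^sub>2) (Mt x\<^sub>1 x\<^sub>2)),
     (Mt (Jn x\<^sub>0 x\<^sub>1) x\<^sub>2, Jn (Mt x\<^sub>0 x\<^sub>2) (Mt x\<^sub>1 x\<^sub>2)),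
     (Mt (Pc x\<^sub>0) (top_char_tm n x\<^sub>2), Mt (Pc (Mt x\<^sub>0 (top_char_tm n x\<^sub>2))) (top_char_tm n x\<^sub>2)),
     (Mt (Ng x\<^sub>0) (top_char_tm n x\<^sub>2), Mt (Ng (Mt x\<^sub>0 (top_char_tm n x\<^sub>2))) (top_char_tm n x\<^sub>2)),
     (eq_char_tm n x\<^sub>0 x\<^sub>0, Top),
     (Mt x\<^sub>0 (eq_char_tm n x\<^sub>0 x\<^sub>1), Mt x\<^sub>1 (eq_char_tm n x\<^sub>0 x\<^sub>1))}"

lemma (in simple_Mn_algebra) simple_Mn_identities_hold:
  assumes "(s, t) \<in> simple_Mn_identities n"
  shows "sat A s t"
  unfolding sat_def
proof (intro allI impI)
  fix \<sigma> :: "nat \<Rightarrow> 'a" assume \<sigma>: "\<forall>i. \<sigma> i \<in> carrier A"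
  then have x: "\<sigma> 0 \<in> carrier A" "\<sigma> (Suc 0) \<in> carrier A" "\<sigma> 2 \<in> carrier A" by auto
  from assms show "eval A \<sigma> s = eval A \<sigma> t"
    unfolding simple_Mn_identities_def
    by (elim insertE emptyE)
      (simp_all add: x meet_meet_distrib[of "\<sigma> 0" "\<sigma> (Suc 0)" "\<sigma> 2"] meet_join_distrib_right
        pc_meet_meet neg_meet_top_char[symmetric] meet_eq_char_absorb[THEN eqTrueI])
qed

definition val3 :: "'a \<Rightarrow> 'a \<Rightarrow> 'a \<Rightarrow> nat \<Rightarrow> 'a" where
  "val3 p q r i = (if i = 0 then p else if i = 1 then q else r)"

lemma val3_simps [simp]: "val3 p q r 0 = p" "val3 p q r (Suc 0) = q" "val3 p q r 2 = r"
  by (simp_all add: val3_def)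

definition meet_kernel :: "('a, 'm) pdm_scheme \<Rightarrow> 'a \<Rightarrow> ('a \<times> 'a) set" where
  "meet_kernel X d = {(p, q). p \<in> carrier X \<and> q \<in> carrier X \<and> meet X p d = meet X q d}"

locale simple_in_V =
  fixes K :: "'a pdm set" and n :: nat and B :: "'b pdm"
  assumes K_simple_Mn: "\<forall>A\<in>K. simple A \<and> M n A"
    and B_in_V: "in_V K B"
    and B_simple: "simple B"

sublocale simple_in_V \<subseteq> B: pdm_alg B
  using B_in_V by unfold_locales (simp add: in_V_def)

context simple_in_V
begin

lemma K_simple_Mn_algebra: "A \<in> K \<Longrightarrow> simple_Mn_algebra A n"
  using K_simple_Mn by (simp add: simple_Mn_algebra_def simple_Mn_algebra_axioms_def Mn_algebra_def)

lemma K_is_alg: "A \<in> K \<Longrightarrow> is_alg A"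
  using K_simple_Mn by (simp add: M_def)

lemma sat_B_if_sat_K: "(\<And>A. A \<in> K \<Longrightarrow> sat A s t) \<Longrightarrow> sat B s t"
  using B_in_V by (simp add: in_V_def)

lemma B_identity:
  assumes "(s, t) \<in> simple_Mn_identities n" "p \<in> carrier B" "q \<in> carrier B" "r \<in> carrier B"
  shows "eval B (val3 p q r) s = eval B (val3 p q r) t"
proof -
  have "sat B s t"
    using assms(1) K_simple_Mn_algebra simple_Mn_algebra.simple_Mn_identities_hold
    by (blast intro: sat_B_if_sat_K)
  moreover have "\<forall>i. val3 p q r i \<in> carrier B" using assms(2-4) by (simp add: val3_def)
  ultimately show ?thesis unfolding sat_def by blast
qed

lemma B_meet_top_right [simp]: "p \<in> carrier B \<Longrightarrow> meet B p (top B) = p"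
  using B_identity[of "Mt x\<^sub>0 Top" x\<^sub>0 p p p] by (simp add: simple_Mn_identities_def)

lemma B_meet_bot_right [simp]: "p \<in> carrier B \<Longrightarrow> meet B p (bot B) = bot B"
  using B_identity[of "Mt x\<^sub>0 Bot" Bot p p p] by (simp add: simple_Mn_identities_def)

lemma B_meet_top_left [simp]: "p \<in> carrier B \<Longrightarrow> meet B (top B) p = p"
  using B_identity[of "Mt Top x\<^sub>0" x\<^sub>0 p p p] by (simp add: simple_Mn_identities_def)

lemma B_meet_bot_left [simp]: "p \<in> carrier B \<Longrightarrow> meet B (bot B) p = bot B"
  using B_identity[of "Mt Bot x\<^sub>0" Bot p p p] by (simp add: simple_Mn_identities_def)

lemma B_meet_idem [simp]: "p \<in> carrier B \<Longrightarrow> meet B p p = p"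
  using B_identity[of "Mt x\<^sub>0 x\<^sub>0" x\<^sub>0 p p p] by (simp add: simple_Mn_identities_def)

lemma B_pc_bot [simp]: "pc B (bot B) = top B"
  using B_identity[of "Pc Bot" Top "top B" "top B" "top B"] by (simp add: simple_Mn_identities_def)

lemma B_meet_meet_distrib:
  "p \<in> carrier B \<Longrightarrow> q \<in> carrier B \<Longrightarrow> r \<in> carrier B \<Longrightarrow>
   meet B (meet B p q) r = meet B (meet B p r) (meet B q r)"
  using B_identity[of "Mt (Mt x\<^sub>0 x\<^sub>1) x\<^sub>2" "Mt (Mt x\<^sub>0 x\<^sub>2) (Mt x\<^sub>1 x\<^sub>2)" p q r]
  by (simp add: simple_Mn_identities_def)

lemma B_meet_join_distrib:
  "p \<in> carrier B \<Longrightarrow> q \<in> carrier B \<Longrightarrow> r \<in> carrier B \<Longrightarrow>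
   meet B (join B p q) r = join B (meet B p r) (meet B q r)"
  using B_identity[of "Mt (Jn x\<^sub>0 x\<^sub>1) x\<^sub>2" "Jn (Mt x\<^sub>0 x\<^sub>2) (Mt x\<^sub>1 x\<^sub>2)" p q r]
  by (simp add: simple_Mn_identities_def)

lemma B_pc_meet_top_char:
  "p \<in> carrier B \<Longrightarrow> r \<in> carrier B \<Longrightarrow>
   meet B (pc B p) (top_char B n r) = meet B (pc B (meet B p (top_char B n r))) (top_char B n r)"
  using B_identity[of "Mt (Pc x\<^sub>0) (top_char_tm n x\<^sub>2)"
      "Mt (Pc (Mt x\<^sub>0 (top_char_tm n x\<^sub>2))) (top_char_tm n x\<^sub>2)" p p r]
  by (simp add: simple_Mn_identities_def)

lemma B_neg_meet_top_char:
  "p \<in> carrier B \<Longrightarrow> r \<in> carrier B \<Longrightarrow>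
   meet B (neg B p) (top_char B n r) = meet B (neg B (meet B p (top_char B n r))) (top_char B n r)"
  using B_identity[of "Mt (Ng x\<^sub>0) (top_char_tm n x\<^sub>2)"
      "Mt (Ng (Mt x\<^sub>0 (top_char_tm n x\<^sub>2))) (top_char_tm n x\<^sub>2)" p p r]
  by (simp add: simple_Mn_identities_def)

lemma B_eq_char_self [simp]: "p \<in> carrier B \<Longrightarrow> eq_char B n p p = top B"
  using B_identity[of "eq_char_tm n x\<^sub>0 x\<^sub>0" Top p p p] by (simp add: simple_Mn_identities_def)

lemma B_meet_eq_char_absorb:
  "p \<in> carrier B \<Longrightarrow> q \<in> carrier B \<Longrightarrow> meet B p (eq_char B n p q) = meet B q (eq_char B n p q)"
  using B_identity[of "Mt x\<^sub>0 (eq_char_tm n x\<^sub>0 x\<^sub>1)" "Mt x\<^sub>1 (eq_char_tm n x\<^sub>0 x\<^sub>1)" p q q]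
  by (simp add: simple_Mn_identities_def)

lemma B_top_ne_bot: "top B \<noteq> bot B"
proof
  assume top_bot: "top B = bot B"
  have "p = bot B" if "p \<in> carrier B" for p
    using that B_meet_top_right[of p] top_bot by simp
  moreover obtain p q where "p \<in> carrier B" "q \<in> carrier B" "p \<noteq> q"
    using B_simple by (auto simp: simple_def)
  ultimately show False by blast
qed

lemma B_eq_char_eq_topD: "p \<in> carrier B \<Longrightarrow> q \<in> carrier B \<Longrightarrow> eq_char B n p q = top B \<Longrightarrow> p = q"
  using B_meet_eq_char_absorb[of p q] by simp

text \<open>\<open>B\<close> is only known to satisfy the identities of \<open>K\<close>, so the filter argument used in
  \<open>simple_Mn_algebra\<close> is replaced by the kernel of \<open>p \<mapsto> p \<and> top_char n u\<close>.\<close>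

lemma B_congruence_meet_kernel:
  assumes u: "u \<in> carrier B"
  shows "congruence B (meet_kernel B (top_char B n u))"
proof -
  let ?d = "top_char B n u"
  have d: "?d \<in> carrier B" using u by simp
  show ?thesis
  proof (rule congruenceI)
    show "equiv (carrier B) (meet_kernel B ?d)"
      unfolding equiv_def refl_on_def sym_def trans_def meet_kernel_def by auto
  next
    fix p q r s assume "(p, q) \<in> meet_kernel B ?d" "(r, s) \<in> meet_kernel B ?d"
    then have carriers: "p \<in> carrier B" "q \<in> carrier B" "r \<in> carrier B" "s \<in> carrier B"
      and eqs: "meet B p ?d = meet B q ?d" "meet B r ?d = meet B s ?d"
      unfolding meet_kernel_def by auto
    show "(meet B p r, meet B q s) \<in> meet_kernel B ?d"
      using carriers eqs d B_meet_meet_distrib[of p r ?d] B_meet_meet_distrib[of q s ?d]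
      unfolding meet_kernel_def by simp
    show "(join B p r, join B q s) \<in> meet_kernel B ?d"
      using carriers eqs d B_meet_join_distrib[of p r ?d] B_meet_join_distrib[of q s ?d]
      unfolding meet_kernel_def by simp
  next
    fix p q assume "(p, q) \<in> meet_kernel B ?d"
    then have carriers: "p \<in> carrier B" "q \<in> carrier B" and eq: "meet B p ?d = meet B q ?d"
      unfolding meet_kernel_def by auto
    show "(pc B p, pc B q) \<in> meet_kernel B ?d"
      using carriers eq u B_pc_meet_top_char[of p u] B_pc_meet_top_char[of q u]
      unfolding meet_kernel_def by simp
    show "(neg B p, neg B q) \<in> meet_kernel B ?d"
      using carriers eq u B_neg_meet_top_char[of p u] B_neg_meet_top_char[of q u]
      unfolding meet_kernel_def by simp
  qed
qed

lemma B_top_char_bot_or_top: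
  assumes u: "u \<in> carrier B"
  shows "top_char B n u = bot B \<or> top_char B n u = top B"
proof -
  let ?d = "top_char B n u"
  have d: "?d \<in> carrier B" using u by simp
  show ?thesis
  proof (cases rule: simple_congruence_cases[OF B_simple B_congruence_meet_kernel[OF u]])
    case 1
    have "(?d, top B) \<in> meet_kernel B ?d" unfolding meet_kernel_def using d by simp
    then have "?d = top B" using 1 by (simp add: Id_on_iff)
    then show ?thesis by simp
  next
    case 2
    then have "(bot B, top B) \<in> meet_kernel B ?d" by simp
    then show ?thesis unfolding meet_kernel_def using d by simp
  qed
qed

lemma B_eq_char_bot_or_top:
  "p \<in> carrier B \<Longrightarrow> q \<in> carrier B \<Longrightarrow> eq_char B n p q = bot B \<or> eq_char B n p q = top B"
  unfolding eq_char_def by (rule B_top_char_bot_or_top) simp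

end

section \<open>Free algebras of \<open>V(K)\<close>\<close>

instance tm :: countable
  by countable_datatype

fun vars :: "tm \<Rightarrow> nat set" where
  "vars (Var i) = {i}"
| "vars Bot = {}"
| "vars Top = {}"
| "vars (Mt s t) = vars s \<union> vars t"
| "vars (Jn s t) = vars s \<union> vars t"
| "vars (Pc s) = vars s"
| "vars (Ng s) = vars s"

fun subst :: "(nat \<Rightarrow> tm) \<Rightarrow> tm \<Rightarrow> tm" where
  "subst \<tau> (Var i) = \<tau> i"
| "subst \<tau> Bot = Bot"
| "subst \<tau> Top = Top"
| "subst \<tau> (Mt s t) = Mt (subst \<tau> s) (subst \<tau> t)"
| "subst \<tau> (Jn s t) = Jn (subst \<tau> s) (subst \<tau> t)"
| "subst \<tau> (Pc s) = Pc (subst \<tau> s)"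
| "subst \<tau> (Ng s) = Ng (subst \<tau> s)"

lemma eval_subst: "eval A \<sigma> (subst \<tau> t) = eval A (\<lambda>i. eval A \<sigma> (\<tau> i)) t"
  by (induct t) auto

lemma vars_top_char_tm: "vars (top_char_tm k u) = vars u"
proof -
  have "vars ((ns_tm ^^ j) y) = vars y" for j y by (induct j) (simp_all add: ns_tm_def)
  then have "vars (meet_iter_tm j y) = vars y" for j y by (induct j) (simp_all del: funpow.simps)
  then show ?thesis by (simp add: top_char_tm_def)
qed

lemma vars_eq_char_tm [simp]: "vars (eq_char_tm k a b) = vars a \<union> vars b"
  by (auto simp: eq_char_tm_def eq_test_tm_def vars_top_char_tm)

definition id_holds :: "'a pdm set \<Rightarrow> tm \<Rightarrow> tm \<Rightarrow> bool" where
  "id_holds K s t \<longleftrightarrow> (\<forall>A\<in>K. sat A s t)"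

lemma id_holds_refl: "id_holds K t t"
  by (simp add: id_holds_def sat_def)

lemma id_holds_sym: "id_holds K s t \<Longrightarrow> id_holds K t s"
  by (simp add: id_holds_def sat_def)

lemma id_holds_trans: "id_holds K s t \<Longrightarrow> id_holds K t u \<Longrightarrow> id_holds K s u"
  by (simp add: id_holds_def sat_def)

lemma id_holds_Mt: "id_holds K s s' \<Longrightarrow> id_holds K t t' \<Longrightarrow> id_holds K (Mt s t) (Mt s' t')"
  by (simp add: id_holds_def sat_def)

lemma id_holds_Jn: "id_holds K s s' \<Longrightarrow> id_holds K t t' \<Longrightarrow> id_holds K (Jn s t) (Jn s' t')"
  by (simp add: id_holds_def sat_def)

lemma id_holds_Pc: "id_holds K s s' \<Longrightarrow> id_holds K (Pc s) (Pc s')"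
  by (simp add: id_holds_def sat_def)

lemma id_holds_Ng: "id_holds K s s' \<Longrightarrow> id_holds K (Ng s) (Ng s')"
  by (simp add: id_holds_def sat_def)

lemma id_holds_subst:
  assumes "\<forall>A\<in>K. is_alg A" and "id_holds K s t"
  shows "id_holds K (subst \<tau> s) (subst \<tau> t)"
  unfolding id_holds_def sat_def
proof (intro ballI allI impI)
  fix A and \<sigma> :: "nat \<Rightarrow> 'a" assume A: "A \<in> K" and \<sigma>: "\<forall>i. \<sigma> i \<in> carrier A"
  interpret pdm_alg A using assms(1) A by unfold_locales blast
  have "sat A s t" using assms(2) A by (simp add: id_holds_def)
  then show "eval A \<sigma> (subst \<tau> s) = eval A \<sigma> (subst \<tau> t)"
    unfolding eval_subst sat_def using \<sigma> by simp
qed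

text \<open>Classes of terms modulo the identities of \<open>K\<close> are coded as natural numbers through a
  canonical representative, since \<open>locally_finite\<close> speaks about algebras carried by \<open>nat\<close>.\<close>

definition canon :: "'a pdm set \<Rightarrow> tm \<Rightarrow> tm" where
  "canon K t = (SOME u. id_holds K u t)"

definition code :: "'a pdm set \<Rightarrow> tm \<Rightarrow> nat" where
  "code K t = to_nat (canon K t)"

lemma id_holds_canon: "id_holds K (canon K t) t"
  unfolding canon_def by (rule someI[of _ t]) (rule id_holds_refl)

lemma id_holds_canon_iff: "id_holds K (canon K s) (canon K t) \<longleftrightarrow> id_holds K s t"
  using id_holds_canon[of K s] id_holds_canon[of K t] id_holds_sym id_holds_trans by meson

lemma from_nat_code [simp]: "from_nat (code K t) = canon K t"
  by (simp add: code_def)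

lemma code_eq_iff: "code K s = code K t \<longleftrightarrow> id_holds K s t"
proof
  assume "code K s = code K t"
  then have "canon K s = canon K t" unfolding code_def by simp
  then show "id_holds K s t"
    using id_holds_canon_iff[of K s t] id_holds_refl by metis
next
  assume st: "id_holds K s t"
  have "(\<lambda>u. id_holds K u s) = (\<lambda>u. id_holds K u t)"
    using st id_holds_trans id_holds_sym by (intro ext iffI) blast+
  then show "code K s = code K t" unfolding code_def canon_def by simp
qed

definition free_alg :: "'a pdm set \<Rightarrow> nat \<Rightarrow> nat pdm" where
  "free_alg K m =
    \<lparr>carrier = code K ` {t. vars t \<subseteq> {..<m}},
     meet = \<lambda>a b. code K (Mt (from_nat a) (from_nat b)),
     join = \<lambda>a b. code K (Jn (from_nat a) (from_nat b)),
     pc = \<lambda>a. code K (Pc (from_nat a)),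
     neg = \<lambda>a. code K (Ng (from_nat a)),
     bot = code K Bot, top = code K Top\<rparr>"

lemma free_alg_simps [simp]:
  "carrier (free_alg K m) = code K ` {t. vars t \<subseteq> {..<m}}"
  "meet (free_alg K m) (code K s) (code K t) = code K (Mt s t)"
  "join (free_alg K m) (code K s) (code K t) = code K (Jn s t)"
  "pc (free_alg K m) (code K s) = code K (Pc s)"
  "neg (free_alg K m) (code K s) = code K (Ng s)"
  "bot (free_alg K m) = code K Bot"
  "top (free_alg K m) = code K Top"
  unfolding free_alg_def
  by (simp_all add: code_eq_iff id_holds_Mt id_holds_Jn id_holds_Pc id_holds_Ng id_holds_canon)

lemma is_alg_free_alg: "is_alg (free_alg K m)"
  unfolding is_alg_def by (auto intro!: imageI)

lemma eval_free_alg: "(\<And>i. \<sigma> i = code K (\<tau> i)) \<Longrightarrow> eval (free_alg K m) \<sigma> t = code K (subst \<tau> t)"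
  by (induct t) simp_all

lemma free_alg_in_V:
  assumes K: "\<forall>A\<in>K. is_alg A"
  shows "in_V K (free_alg K m)"
  unfolding in_V_def
proof (intro conjI allI impI)
  show "is_alg (free_alg K m)" by (rule is_alg_free_alg)
  fix s t assume "\<forall>A\<in>K. sat A s t"
  then have st: "id_holds K s t" by (simp add: id_holds_def)
  show "sat (free_alg K m) s t" unfolding sat_def
  proof (intro allI impI)
    fix \<sigma> :: "nat \<Rightarrow> nat" assume "\<forall>i. \<sigma> i \<in> carrier (free_alg K m)"
    then have "\<forall>i. \<exists>u. \<sigma> i = code K u" by auto
    then obtain \<tau> where \<tau>: "\<And>i. \<sigma> i = code K (\<tau> i)" by metis
    have "id_holds K (subst \<tau> s) (subst \<tau> t)" by (rule id_holds_subst[OF K st])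
    then show "eval (free_alg K m) \<sigma> s = eval (free_alg K m) \<sigma> t"
      using eval_free_alg[of \<sigma> K \<tau>] \<tau> by (simp add: code_eq_iff)
  qed
qed

lemma (in pdm_alg) Sg_subset_carrier:
  assumes "X \<subseteq> carrier A"
  shows "Sg A X \<subseteq> carrier A"
proof
  fix x assume "x \<in> Sg A X"
  then show "x \<in> carrier A" using assms by induct auto
qed

lemma free_alg_generators: "(\<lambda>i. code K (Var i)) ` {..<m} \<subseteq> carrier (free_alg K m)"
proof
  fix c assume "c \<in> (\<lambda>i. code K (Var i)) ` {..<m}"
  then obtain i where "i < m" "c = code K (Var i)" by blast
  then show "c \<in> carrier (free_alg K m)" by (auto intro: image_eqI[of _ "code K" "Var i"])
qed

lemma Sg_free_alg: "Sg (free_alg K m) ((\<lambda>i. code K (Var i)) ` {..<m}) = carrier (free_alg K m)"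
proof
  show "Sg (free_alg K m) ((\<lambda>i. code K (Var i)) ` {..<m}) \<subseteq> carrier (free_alg K m)"
    using is_alg_free_alg free_alg_generators by (rule pdm_alg.Sg_subset_carrier[OF pdm_alg.intro])
  let ?S = "Sg (free_alg K m) ((\<lambda>i. code K (Var i)) ` {..<m})"
  have "vars t \<subseteq> {..<m} \<Longrightarrow> code K t \<in> ?S" for t
  proof (induct t)
    case (Var i)
    then show ?case by (auto intro: Sg.gen)
  next
    case Bot
    then show ?case using Sg.bot[of "free_alg K m"] by simp
  next
    case Top
    then show ?case using Sg.top[of "free_alg K m"] by simp
  next
    case (Mt s t)
    then show ?case using Sg.meet[of "code K s" "free_alg K m" _ "code K t"] by simp
  next
    case (Jn s t)
    then show ?case using Sg.join[of "code K s" "free_alg K m" _ "code K t"] by simp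
  next
    case (Pc s)
    then show ?case using Sg.pc[of "code K s" "free_alg K m"] by simp
  next
    case (Ng s)
    then show ?case using Sg.neg[of "code K s" "free_alg K m"] by simp
  qed
  then show "carrier (free_alg K m) \<subseteq> ?S"
    by (simp add: image_subset_iff)
qed

lemma finite_codes:
  assumes "\<forall>A\<in>K. is_alg A" and "locally_finite K"
  shows "finite (code K ` {t. vars t \<subseteq> {..<m}})"
proof -
  have "in_V K (free_alg K m)" by (rule free_alg_in_V[OF assms(1)])
  then have "finite (carrier (free_alg K m))"
    using assms(2) free_alg_generators Sg_free_alg unfolding locally_finite_def
    by (meson finite_imageI finite_lessThan)
  then show ?thesis by simp
qed

definition distinguishes :: "'a pdm set \<Rightarrow> 'a pdm \<times> (nat \<Rightarrow> 'a) \<Rightarrow> tm \<Rightarrow> tm \<Rightarrow> bool" where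
  "distinguishes K w s t \<longleftrightarrow> fst w \<in> K \<and> (\<forall>i. snd w i \<in> carrier (fst w)) \<and>
     eval (fst w) (snd w) s \<noteq> eval (fst w) (snd w) t"

lemma ex_distinguishes_iff: "(\<exists>w. distinguishes K w s t) \<longleftrightarrow> \<not> id_holds K s t"
  unfolding distinguishes_def id_holds_def sat_def by auto

lemma distinguishes_canon: "distinguishes K w (canon K s) (canon K t) \<longleftrightarrow> distinguishes K w s t"
proof -
  have "eval (fst w) (snd w) (canon K u) = eval (fst w) (snd w) u"
    if "fst w \<in> K" "\<forall>i. snd w i \<in> carrier (fst w)" for u
    using id_holds_canon[of K u] that unfolding id_holds_def sat_def by blast
  then show ?thesis unfolding distinguishes_def by auto
qed

lemma finite_separating_family:
  assumes "finite (code K ` T)"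
  shows "\<exists>W. finite W \<and> (\<forall>A \<sigma>. (A, \<sigma>) \<in> W \<longrightarrow> A \<in> K \<and> (\<forall>i. \<sigma> i \<in> carrier A)) \<and>
    (\<forall>s\<in>T. \<forall>t\<in>T. (\<forall>A \<sigma>. (A, \<sigma>) \<in> W \<longrightarrow> eval A \<sigma> s = eval A \<sigma> t) \<longrightarrow> id_holds K s t)"
proof -
  let ?P = "{(c, d). c \<in> code K ` T \<and> d \<in> code K ` T \<and> c \<noteq> d}"
  have "\<forall>p\<in>?P. \<exists>w. distinguishes K w (from_nat (fst p)) (from_nat (snd p))"
  proof
    fix p assume "p \<in> ?P"
    then obtain c d where cd: "p = (c, d)" "c \<in> code K ` T" "d \<in> code K ` T" "c \<noteq> d"
      by (cases p) simp
    then obtain s t where "c = code K s" "d = code K t" by blast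
    with cd have "p = (code K s, code K t)" "\<not> id_holds K (canon K s) (canon K t)"
      by (simp_all add: code_eq_iff id_holds_canon_iff)
    then show "\<exists>w. distinguishes K w (from_nat (fst p)) (from_nat (snd p))"
      using ex_distinguishes_iff[of K "canon K s" "canon K t"] by simp
  qed
  from bchoice[OF this] obtain wit
    where wit: "\<forall>p\<in>?P. distinguishes K (wit p) (from_nat (fst p)) (from_nat (snd p))" ..
  show ?thesis
  proof (rule exI[of _ "wit ` ?P"], intro conjI)
    have "finite ?P" by (rule finite_subset[of _ "code K ` T \<times> code K ` T"]) (use assms in auto)
    then show "finite (wit ` ?P)" by simp
    show "\<forall>A \<sigma>. (A, \<sigma>) \<in> wit ` ?P \<longrightarrow> A \<in> K \<and> (\<forall>i. \<sigma> i \<in> carrier A)"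
    proof (intro allI impI)
      fix A \<sigma> assume "(A, \<sigma>) \<in> wit ` ?P"
      then obtain p where p: "p \<in> ?P" "(A, \<sigma>) = wit p" by blast
      have "distinguishes K (wit p) (from_nat (fst p)) (from_nat (snd p))" by (rule bspec[OF wit p(1)])
      then show "A \<in> K \<and> (\<forall>i. \<sigma> i \<in> carrier A)"
        unfolding p(2)[symmetric] distinguishes_def by simp
    qed
    show "\<forall>s\<in>T. \<forall>t\<in>T. (\<forall>A \<sigma>. (A, \<sigma>) \<in> wit ` ?P \<longrightarrow> eval A \<sigma> s = eval A \<sigma> t) \<longrightarrow>
      id_holds K s t"
    proof (intro ballI impI)
      fix s t assume st: "s \<in> T" "t \<in> T"
        and agree: "\<forall>A \<sigma>. (A, \<sigma>) \<in> wit ` ?P \<longrightarrow> eval A \<sigma> s = eval A \<sigma> t"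
      show "id_holds K s t"
      proof (rule ccontr)
        assume "\<not> id_holds K s t"
        then have P: "(code K s, code K t) \<in> ?P"
          using imageI[OF st(1), of "code K"] imageI[OF st(2), of "code K"] by (simp add: code_eq_iff)
        obtain A \<sigma> where w: "wit (code K s, code K t) = (A, \<sigma>)" by (rule prod.exhaust)
        have "distinguishes K (A, \<sigma>) s t"
          using bspec[OF wit P] unfolding w by (simp add: distinguishes_canon)
        moreover have "(A, \<sigma>) \<in> wit ` ?P" using image_eqI[of "(A, \<sigma>)" wit, OF w[symmetric] P] .
        ultimately show False using agree unfolding distinguishes_def by auto
      qed
    qed
  qed
qed

section \<open>Embedding finite simple algebras of \<open>V(K)\<close>\<close>

definition term_subalg :: "'a pdm \<Rightarrow> (nat \<Rightarrow> 'a) \<Rightarrow> nat \<Rightarrow> 'a pdm" where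
  "term_subalg A \<sigma> m = A\<lparr>carrier := eval A \<sigma> ` {t. vars t \<subseteq> {..<m}}\<rparr>"

lemma carrier_term_subalg:
  "x \<in> carrier (term_subalg A \<sigma> m) \<longleftrightarrow> (\<exists>t. vars t \<subseteq> {..<m} \<and> x = eval A \<sigma> t)"
  unfolding term_subalg_def by auto

lemma subalg_term_subalg:
  assumes "is_alg A" and "\<forall>i. \<sigma> i \<in> carrier A"
  shows "subalg (term_subalg A \<sigma> m) A"
proof -
  interpret pdm_alg A by unfold_locales (rule assms(1))
  let ?S = "term_subalg A \<sigma> m"
  have ops: "meet ?S = meet A" "join ?S = join A" "pc ?S = pc A" "neg ?S = neg A"
    "bot ?S = bot A" "top ?S = top A"
    by (simp_all add: term_subalg_def)
  have "is_alg ?S"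
    unfolding is_alg_def ops
  proof (intro conjI ballI)
    show "bot A \<in> carrier ?S" "top A \<in> carrier ?S"
      using carrier_term_subalg[of _ A \<sigma> m] by (metis eval.simps(2) empty_subsetI vars.simps(2),
        metis eval.simps(3) empty_subsetI vars.simps(3))
  next
    fix x y assume "x \<in> carrier ?S" "y \<in> carrier ?S"
    then obtain s t where st: "vars s \<subseteq> {..<m}" "vars t \<subseteq> {..<m}" "x = eval A \<sigma> s" "y = eval A \<sigma> t"
      unfolding carrier_term_subalg by blast
    show "meet A x y \<in> carrier ?S" unfolding carrier_term_subalg
      using st by (intro exI[of _ "Mt s t"]) simp
    show "join A x y \<in> carrier ?S" unfolding carrier_term_subalg
      using st by (intro exI[of _ "Jn s t"]) simp
  next
    fix x assume "x \<in> carrier ?S"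
    then obtain s where st: "vars s \<subseteq> {..<m}" "x = eval A \<sigma> s"
      unfolding carrier_term_subalg by blast
    show "pc A x \<in> carrier ?S" unfolding carrier_term_subalg
      using st by (intro exI[of _ "Pc s"]) simp
    show "neg A x \<in> carrier ?S" unfolding carrier_term_subalg
      using st by (intro exI[of _ "Ng s"]) simp
  qed
  moreover have "carrier ?S \<subseteq> carrier A"
    using assms(2) unfolding term_subalg_def by auto
  ultimately show ?thesis unfolding subalg_def ops by simp
qed

lemma hom_term_subalg:
  fixes A :: "'a pdm" and B :: "'b pdm"
  assumes gen: "carrier B = eval B \<tau> ` {t. vars t \<subseteq> {..<m}}"
    and f_eval: "\<And>t. vars t \<subseteq> {..<m} \<Longrightarrow> f (eval B \<tau> t) = eval A \<sigma> t"
  shows "hom f B (term_subalg A \<sigma> m)"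
  unfolding hom_def term_subalg_def
proof (intro conjI ballI)
  let ?S = "A\<lparr>carrier := eval A \<sigma> ` {t. vars t \<subseteq> {..<m}}\<rparr>"
  show "f ` carrier B \<subseteq> carrier ?S"
    using gen f_eval by auto
  show "f (bot B) = bot ?S"
    using f_eval[of Bot] by simp
  show "f (top B) = top ?S"
    using f_eval[of Top] by simp
next
  let ?S = "A\<lparr>carrier := eval A \<sigma> ` {t. vars t \<subseteq> {..<m}}\<rparr>"
  fix b c assume "b \<in> carrier B" "c \<in> carrier B"
  then obtain s t where st: "vars s \<subseteq> {..<m}" "vars t \<subseteq> {..<m}" "b = eval B \<tau> s" "c = eval B \<tau> t"
    using gen by blast
  show "f (meet B b c) = meet ?S (f b) (f c)"
    using st f_eval f_eval[of "Mt s t"] by simp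
  show "f (join B b c) = join ?S (f b) (f c)"
    using st f_eval f_eval[of "Jn s t"] by simp
next
  let ?S = "A\<lparr>carrier := eval A \<sigma> ` {t. vars t \<subseteq> {..<m}}\<rparr>"
  fix b assume "b \<in> carrier B"
  then obtain s where st: "vars s \<subseteq> {..<m}" "b = eval B \<tau> s" using gen by blast
  show "f (pc B b) = pc ?S (f b)"
    using st f_eval f_eval[of "Pc s"] by simp
  show "f (neg B b) = neg ?S (f b)"
    using st f_eval f_eval[of "Ng s"] by simp
qed

lemma isomorphic_term_subalg:
  fixes A :: "'a pdm" and B :: "'b pdm"
  assumes gen: "carrier B = eval B \<tau> ` {t. vars t \<subseteq> {..<m}}"
    and same_kernel: "\<And>s t. vars s \<subseteq> {..<m} \<Longrightarrow> vars t \<subseteq> {..<m} \<Longrightarrow>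
      eval B \<tau> s = eval B \<tau> t \<longleftrightarrow> eval A \<sigma> s = eval A \<sigma> t"
  shows "isomorphic B (term_subalg A \<sigma> m)"
proof -
  let ?T = "{t. vars t \<subseteq> {..<m}}"
  define f where "f b = eval A \<sigma> (SOME t. t \<in> ?T \<and> eval B \<tau> t = b)" for b
  have f_eval: "f (eval B \<tau> t) = eval A \<sigma> t" if t: "t \<in> ?T" for t
  proof -
    define u where "u = (SOME u. u \<in> ?T \<and> eval B \<tau> u = eval B \<tau> t)"
    have "\<exists>u. u \<in> ?T \<and> eval B \<tau> u = eval B \<tau> t" using t by blast
    then have "u \<in> ?T \<and> eval B \<tau> u = eval B \<tau> t"
      unfolding u_def by (rule someI_ex)
    then have "eval A \<sigma> u = eval A \<sigma> t" using same_kernel t by blast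
    then show ?thesis unfolding f_def u_def[symmetric] .
  qed
  have "hom f B (term_subalg A \<sigma> m)"
    using gen f_eval by (rule hom_term_subalg) simp
  moreover have "bij_betw f (carrier B) (carrier (term_subalg A \<sigma> m))"
  proof (rule bij_betw_imageI)
    show "inj_on f (carrier B)"
    proof (rule inj_onI)
      fix b c assume "b \<in> carrier B" "c \<in> carrier B" and fbc: "f b = f c"
      then obtain s t where st: "s \<in> ?T" "t \<in> ?T" "b = eval B \<tau> s" "c = eval B \<tau> t"
        using gen by blast
      then have "eval A \<sigma> s = eval A \<sigma> t" using fbc f_eval by simp
      then show "b = c" using st same_kernel by simp
    qed
    have "f ` carrier B = (\<lambda>t. f (eval B \<tau> t)) ` ?T" by (simp add: gen image_image)
    also have "\<dots> = eval A \<sigma> ` ?T" by (rule image_cong) (simp_all add: f_eval)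
    finally show "f ` carrier B = carrier (term_subalg A \<sigma> m)"
      by (simp add: term_subalg_def)
  qed
  ultimately show ?thesis unfolding isomorphic_def by blast
qed

context simple_in_V
begin

lemma common_bot_term:
  assumes "finite W"
    and "\<And>A \<sigma>. (A, \<sigma>) \<in> W \<Longrightarrow> A \<in> K \<and> (\<forall>i. \<sigma> i \<in> carrier A)"
    and "\<And>A \<sigma>. (A, \<sigma>) \<in> W \<Longrightarrow> \<exists>g. vars g \<subseteq> {..<m} \<and> eval B \<beta> g = top B \<and> eval A \<sigma> g = bot A"
    and \<beta>: "\<forall>i. \<beta> i \<in> carrier B"
  shows "\<exists>G. vars G \<subseteq> {..<m} \<and> eval B \<beta> G = top B \<and>
    (\<forall>A \<sigma>. (A, \<sigma>) \<in> W \<longrightarrow> eval A \<sigma> G = bot A)"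
  using assms(1-3)
proof (induct W rule: finite_induct)
  case empty
  show ?case by (intro exI[of _ Top]) simp
next
  case (insert w W)
  have "\<exists>G. vars G \<subseteq> {..<m} \<and> eval B \<beta> G = top B \<and> (\<forall>A \<sigma>. (A, \<sigma>) \<in> W \<longrightarrow> eval A \<sigma> G = bot A)"
    by (rule insert.hyps(3)) (use insert.prems in blast)+
  then obtain G where G: "vars G \<subseteq> {..<m}" "eval B \<beta> G = top B"
    "\<And>A \<sigma>. (A, \<sigma>) \<in> W \<Longrightarrow> eval A \<sigma> G = bot A"
    by blast
  obtain A \<sigma> where w: "w = (A, \<sigma>)" by (rule prod.exhaust)
  obtain g where g: "vars g \<subseteq> {..<m}" "eval B \<beta> g = top B" "eval A \<sigma> g = bot A"
    using insert.prems(2)[of A \<sigma>] w by blast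
  have "eval A' \<sigma>' (Mt g G) = bot A'" if "(A', \<sigma>') \<in> insert w W" for A' \<sigma>'
  proof -
    have A': "A' \<in> K" "\<forall>i. \<sigma>' i \<in> carrier A'" using insert.prems(1) that by blast+
    then interpret Mn_algebra A' n using K_simple_Mn_algebra simple_Mn_algebra.axioms(1) by blast
    have "eval A' \<sigma>' g = bot A' \<or> eval A' \<sigma>' G = bot A'"
      using that w g(3) G(3) by blast
    then show ?thesis using A'(2) by auto
  qed
  moreover have "eval B \<beta> (Mt g G) = top B" using g G \<beta> by simp
  ultimately show ?case using g(1) G(1) by (intro exI[of _ "Mt g G"]) simp
qed

lemma separating_term:
  assumes "A \<in> K" and \<sigma>: "\<forall>i. \<sigma> i \<in> carrier A" and \<beta>: "\<forall>i. \<beta> i \<in> carrier B"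
    and "eval A \<sigma> s = eval A \<sigma> t" and "eval B \<beta> s \<noteq> eval B \<beta> t"
  shows "eval B \<beta> (Pc (eq_char_tm n s t)) = top B \<and> eval A \<sigma> (Pc (eq_char_tm n s t)) = bot A"
proof -
  interpret simple_Mn_algebra A n using assms(1) by (rule K_simple_Mn_algebra)
  have carriers: "eval B \<beta> s \<in> carrier B" "eval B \<beta> t \<in> carrier B" using \<beta> by simp_all
  then have "eq_char B n (eval B \<beta> s) (eval B \<beta> t) \<noteq> top B"
    using assms(5) B_eq_char_eq_topD by blast
  then have "eq_char B n (eval B \<beta> s) (eval B \<beta> t) = bot B"
    using B_eq_char_bot_or_top[OF carriers] by blast
  then show ?thesis using assms(4) \<sigma> by simp
qed

text \<open>Otherwise the meet of the terms \<open>(eq_char s t)*\<close> witnessing the failure for each member of a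
  finite separating family would be 1 in \<open>B\<close> but equal to 0 in \<open>V(K)\<close>.\<close>

lemma kernel_below_some_member:
  assumes lf: "locally_finite K" and \<beta>: "\<forall>i. \<beta> i \<in> carrier B"
  shows "\<exists>A\<in>K. \<exists>\<sigma>. (\<forall>i. \<sigma> i \<in> carrier A) \<and>
    (\<forall>s t. vars s \<subseteq> {..<m} \<longrightarrow> vars t \<subseteq> {..<m} \<longrightarrow>
       eval A \<sigma> s = eval A \<sigma> t \<longrightarrow> eval B \<beta> s = eval B \<beta> t)"
proof (rule ccontr)
  assume "\<not> ?thesis"
  then have none: "\<exists>s t. vars s \<subseteq> {..<m} \<and> vars t \<subseteq> {..<m} \<and>
      eval A \<sigma> s = eval A \<sigma> t \<and> eval B \<beta> s \<noteq> eval B \<beta> t"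
    if "A \<in> K" "\<forall>i. \<sigma> i \<in> carrier A" for A \<sigma>
    using that by blast
  have "\<forall>A\<in>K. is_alg A" using K_is_alg by blast
  then have codes: "finite (code K ` {t. vars t \<subseteq> {..<m}})" using lf by (rule finite_codes)
  obtain W where "finite W" and W: "\<forall>A \<sigma>. (A, \<sigma>) \<in> W \<longrightarrow> A \<in> K \<and> (\<forall>i. \<sigma> i \<in> carrier A)"
    and separating: "\<forall>s\<in>{t. vars t \<subseteq> {..<m}}. \<forall>t\<in>{t. vars t \<subseteq> {..<m}}.
      (\<forall>A \<sigma>. (A, \<sigma>) \<in> W \<longrightarrow> eval A \<sigma> s = eval A \<sigma> t) \<longrightarrow> id_holds K s t"
    using finite_separating_family[OF codes] by blast
  have bot_terms: "\<exists>g. vars g \<subseteq> {..<m} \<and> eval B \<beta> g = top B \<and> eval A \<sigma> g = bot A"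
    if "(A, \<sigma>) \<in> W" for A \<sigma>
  proof -
    have A: "A \<in> K" "\<forall>i. \<sigma> i \<in> carrier A" using W that by blast+
    then obtain s t where st: "vars s \<subseteq> {..<m}" "vars t \<subseteq> {..<m}"
      and eqs: "eval A \<sigma> s = eval A \<sigma> t" "eval B \<beta> s \<noteq> eval B \<beta> t"
      using none by blast
    have "vars (Pc (eq_char_tm n s t)) \<subseteq> {..<m}" using st by simp
    then show ?thesis using separating_term[OF A \<beta> eqs] by blast
  qed
  have W': "A \<in> K \<and> (\<forall>i. \<sigma> i \<in> carrier A)" if "(A, \<sigma>) \<in> W" for A \<sigma>
    using W that by blast
  obtain G where G: "vars G \<subseteq> {..<m}" "eval B \<beta> G = top B"
    "\<forall>A \<sigma>. (A, \<sigma>) \<in> W \<longrightarrow> eval A \<sigma> G = bot A"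
    using common_bot_term[OF \<open>finite W\<close> W' bot_terms \<beta>] by blast
  have "\<forall>A \<sigma>. (A, \<sigma>) \<in> W \<longrightarrow> eval A \<sigma> G = eval A \<sigma> Bot" using G(3) by simp
  then have "id_holds K G Bot" using separating G(1) by simp
  then have "sat B G Bot" using sat_B_if_sat_K by (simp add: id_holds_def)
  then have "eval B \<beta> G = bot B" using \<beta> unfolding sat_def by auto
  then show False using G(2) B_top_ne_bot by simp
qed

lemma same_kernel_if_kernel_below:
  assumes "A \<in> K" and \<sigma>: "\<forall>i. \<sigma> i \<in> carrier A" and \<beta>: "\<forall>i. \<beta> i \<in> carrier B"
    and below: "\<forall>s t. vars s \<subseteq> {..<m} \<longrightarrow> vars t \<subseteq> {..<m} \<longrightarrow>
       eval A \<sigma> s = eval A \<sigma> t \<longrightarrow> eval B \<beta> s = eval B \<beta> t"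
    and st: "vars s \<subseteq> {..<m}" "vars t \<subseteq> {..<m}"
  shows "eval B \<beta> s = eval B \<beta> t \<longleftrightarrow> eval A \<sigma> s = eval A \<sigma> t"
proof
  interpret simple_Mn_algebra A n using assms(1) by (rule K_simple_Mn_algebra)
  assume "eval B \<beta> s = eval B \<beta> t"
  then have "eval B \<beta> (eq_char_tm n s t) \<noteq> eval B \<beta> Bot"
    using \<beta> B_top_ne_bot by simp
  then have "eval A \<sigma> (eq_char_tm n s t) \<noteq> eval A \<sigma> Bot"
    using below[rule_format, of "eq_char_tm n s t" Bot] st by auto
  moreover have "eval A \<sigma> s \<in> carrier A" "eval A \<sigma> t \<in> carrier A" using \<sigma> by simp_all
  ultimately have "eq_char A n (eval A \<sigma> s) (eval A \<sigma> t) = top A"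
    using eq_char_bot_or_top by auto
  then show "eval A \<sigma> s = eval A \<sigma> t"
    by (rule eq_char_eq_topD[rotated 2]) (simp_all add: \<sigma>)
qed (use below st in blast)

lemma finite_embeds_into_member:
  assumes lf: "locally_finite K" and fin: "finite (carrier B)"
  shows "\<exists>A\<in>K. \<exists>S. subalg S A \<and> isomorphic B S"
proof -
  obtain m and e :: "nat \<Rightarrow> 'b" where e: "carrier B = e ` {i. i < m}"
    using finite_imp_nat_seg_image_inj_on[OF fin] by blast
  define \<beta> where "\<beta> i = (if i < m then e i else top B)" for i
  have \<beta>: "\<forall>i. \<beta> i \<in> carrier B" unfolding \<beta>_def using e by auto
  have gen: "carrier B = eval B \<beta> ` {t. vars t \<subseteq> {..<m}}"
  proof
    show "carrier B \<subseteq> eval B \<beta> ` {t. vars t \<subseteq> {..<m}}"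
    proof
      fix b assume "b \<in> carrier B"
      then obtain i where "i < m" "b = \<beta> i" unfolding e \<beta>_def by auto
      then show "b \<in> eval B \<beta> ` {t. vars t \<subseteq> {..<m}}" by (intro image_eqI[of _ _ "Var i"]) auto
    qed
    show "eval B \<beta> ` {t. vars t \<subseteq> {..<m}} \<subseteq> carrier B" using \<beta> by auto
  qed
  obtain A \<sigma> where A: "A \<in> K" and \<sigma>: "\<forall>i. \<sigma> i \<in> carrier A"
    and below: "\<forall>s t. vars s \<subseteq> {..<m} \<longrightarrow> vars t \<subseteq> {..<m} \<longrightarrow>
       eval A \<sigma> s = eval A \<sigma> t \<longrightarrow> eval B \<beta> s = eval B \<beta> t"
    using kernel_below_some_member[OF lf \<beta>] by blast
  have "isomorphic B (term_subalg A \<sigma> m)"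
    using gen same_kernel_if_kernel_below[OF A \<sigma> \<beta> below] by (rule isomorphic_term_subalg)
  moreover have "subalg (term_subalg A \<sigma> m) A"
    using K_is_alg[OF A] \<sigma> by (rule subalg_term_subalg)
  ultimately show ?thesis using A by blast
qed

end

theorem theorem5p1:
  fixes n :: nat and K :: "'a pdm set"
  assumes "\<forall>A\<in>K. simple A \<and> M n A"
    and "locally_finite K"
  shows "\<forall>B :: 'b pdm. in_V K B \<and> simple B \<and> finite (carrier B) \<longrightarrow>
           (\<exists>A\<in>K. \<exists>S. subalg S A \<and> isomorphic B S)"
proof (intro allI impI)
  fix B :: "'b pdm"
  assume B: "in_V K B \<and> simple B \<and> finite (carrier B)"
  interpret simple_in_V K n B using assms(1) B by unfold_locales blast+
  show "\<exists>A\<in>K. \<exists>S. subalg S A \<and> isomorphic B S"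
    using assms(2) B by (intro finite_embeds_into_member) simp_all
qed

end
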